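(* Let $r$ be a prime power, $q=r^2$, and let $0\le k\le n\le q$ be integers. Then there exists a Hermitian self-orthogonal matrix-product code over $\mathbb{F}_q$ with parameters $[2n,n,d]_q$ where $d\ge\min\{2(n-k+1),k+1\}$.
   Context: For $a\in\mathbb{F}_q$, $\overline{a}:=a^r$. The Hermitian inner product on $\mathbb{F}_q^n$ is $\langle u,v\rangle_H=\sum_i u_i\overline{v_i}$; a linear code $C$ is Hermitian self-orthogonal if $C\subseteq C^{\perp_H}$. A code with parameters $[n,k,d]_q$ has length $n$, dimension $k$, minimum Hamming weight $d$. If $C_1,\dots,C_s$ are linear codes of length $m$ with generator matrices $G_i$ and $A=[a_{ij}]\in M_{s,l}(\mathbb{F}_q)$, the matrix-product code $[C_1,\dots,C_s]\cdot A$ is the linear code of length $ml$ generated by the block matrix whose $(i,j)$ block is $a_{ij}G_i$. *)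

theory Defs
  imports Complex_Main "HOL-Library.Function_Algebras" "HOL-Computational_Algebra.Primes"
begin

text \<open>Vectors of length N over a field are functions nat => 'a vanishing outside {..<N}.\<close>

definition vecs :: "nat \<Rightarrow> (nat \<Rightarrow> 'a::zero) set" where
  "vecs N = {v. \<forall>i\<ge>N. v i = 0}"

definition vscale :: "'a::field \<Rightarrow> (nat \<Rightarrow> 'a) \<Rightarrow> (nat \<Rightarrow> 'a)" where
  "vscale c v = (\<lambda>i. c * v i)"

definition linear_code :: "nat \<Rightarrow> (nat \<Rightarrow> 'a::field) set \<Rightarrow> bool" where
  "linear_code N C \<longleftrightarrow> C \<subseteq> vecs N \<and> module.subspace vscale C"

definition code_dim :: "(nat \<Rightarrow> 'a::field) set \<Rightarrow> nat" where
  "code_dim C = vector_space.dim vscale C"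

definition hweight :: "nat \<Rightarrow> (nat \<Rightarrow> 'a::zero) \<Rightarrow> nat" where
  "hweight N v = card {i. i < N \<and> v i \<noteq> 0}"

text \<open>Hermitian inner product, conjugation a |-> a^r.\<close>
definition herm_inner :: "nat \<Rightarrow> nat \<Rightarrow> (nat \<Rightarrow> 'a::field) \<Rightarrow> (nat \<Rightarrow> 'a) \<Rightarrow> 'a" where
  "herm_inner r N u v = (\<Sum>i<N. u i * (v i) ^ r)"

definition herm_self_orth :: "nat \<Rightarrow> nat \<Rightarrow> (nat \<Rightarrow> 'a::field) set \<Rightarrow> bool" where
  "herm_self_orth r N C \<longleftrightarrow> (\<forall>u\<in>C. \<forall>v\<in>C. herm_inner r N u v = 0)"

text \<open>Matrix-product code [C_0,...,C_{s-1}] . A, A an s x l matrix, codes of length m.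
  Generated by block matrix with (i,j) block a_ij G_i; its row space is the set of
  concatenations (sum_i a_i0 c_i | ... | sum_i a_i(l-1) c_i), c_i in C_i.
  Position p of the length m*l word lies in block p div m at offset p mod m.\<close>
definition mp_code :: "nat \<Rightarrow> nat \<Rightarrow> nat \<Rightarrow> (nat \<Rightarrow> (nat \<Rightarrow> 'a::field) set)
    \<Rightarrow> (nat \<Rightarrow> nat \<Rightarrow> 'a) \<Rightarrow> (nat \<Rightarrow> 'a) set" where
  "mp_code m s l C A =
     {w. \<exists>c. (\<forall>i<s. c i \<in> C i) \<and>
          w = (\<lambda>p. if p < m * l then (\<Sum>i<s. A i (p div m) * c i (p mod m)) else 0)}"

end

(*
  Take C0 = GRS_k(x, 1) and C1 = GRS_(n-k)(x^r, v^r) with the Lagrange weights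
  v_i = 1 / prod_(j <> i) (x_i - x_j). Since sum_i v_i x_i^t = 0 for t <= n - 2, every word of C0
  is Hermitian orthogonal to every word of C1. For A = [[1, alpha], [1, beta]] with alpha <> beta
  and alpha^(r+1) = beta^(r+1) = -1 (they exist because the norm of F_(r^2) has full fibres of
  size r + 1 over F_r), the Hermitian product of two words (c0 + c1 | alpha c0 + beta c1) of
  [C0, C1] A collapses to cross terms between C0 and C1 and hence vanishes. Such a word has
  weight 2 wt(c0) >= 2 (n - k + 1) when c1 = 0, and weight >= wt(c1) >= k + 1 otherwise, because
  alpha <> beta forces a nonzero entry in position i or n + i wherever c1 is nonzero.
*)
theory Submission
  imports
    Defs
    "HOL-Library.Cardinality"
    "HOL-Number_Theory.Residues"
    "HOL-Computational_Algebra.Polynomial"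
begin

section \<open>Finite fields of square order\<close>

text \<open>The library's \<open>finite_field_power_card_eq_same\<close> is stated for the class
  \<open>finite_field\<close>, which \<open>{finite,field}\<close> does not instantiate.\<close>

lemma field_power_card_UNIV:
  fixes x :: "'a::{finite,field}"
  shows "x ^ CARD('a) = x"
proof (cases "x = 0")
  case False
  have "x * (\<Prod>y\<in>UNIV-{0}. x * y) = x * x ^ (CARD('a) - 1) * \<Prod>(UNIV-{0})"
    by (simp add: prod.distrib mult_ac)
  also have "x * x ^ (CARD('a) - 1) = x ^ CARD('a)"
    using finite_UNIV_card_ge_0[where ?'a = 'a] by (simp flip: power_Suc)
  also have "(\<Prod>y\<in>UNIV-{0}. x * y) = (\<Prod>y\<in>UNIV-{0}. y)"
    by (rule prod.reindex_bij_witness[of _ "\<lambda>y. y / x" "\<lambda>y. x * y"]) (use False in auto)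
  finally show ?thesis
    by simp
qed (use finite_UNIV_card_ge_0[where ?'a = 'a] in auto)

lemma CHAR_eq_prime_of_CARD_eq_power:
  assumes "prime p" and "CARD('a::{finite,field}) = p ^ m"
  shows "CHAR('a) = p"
proof -
  have "prime CHAR('a)"
    using prime_CHAR_semidom finite_imp_CHAR_pos[where ?'a = 'a] by auto
  moreover have "CHAR('a) dvd p ^ m"
    using CHAR_dvd_CARD[where ?'a = 'a] assms(2) by simp
  ultimately show ?thesis
    using assms(1) prime_dvd_power primes_dvd_imp_eq by blast
qed

lemma minus_one_power_pred_CHAR_power:
  assumes "prime CHAR('a::comm_ring_1)" and "r = CHAR('a) ^ e"
  shows "(- 1 :: 'a) ^ (r - 1) = 1"
proof (cases "CHAR('a) = 2")
  case True
  then show ?thesis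
    by (simp add: uminus_CHAR_2)
next
  case False
  then have "odd CHAR('a)"
    using assms(1) prime_ge_2_nat[OF assms(1)] by (intro prime_odd_nat) auto
  then have "even (r - 1)"
    using assms(2) by simp
  then show ?thesis
    by simp
qed

lemma card_power_eq_le:
  assumes "m \<ge> 1"
  shows "card {z::'a::idom. z ^ m = c} \<le> m"
proof -
  define P where "P = monom (1::'a) m - [:c:]"
  have "coeff P m = 1"
    using assms by (cases m) (simp_all add: P_def coeff_monom)
  then have "P \<noteq> 0"
    by auto
  moreover have "degree P \<le> m"
    unfolding P_def by (metis degree_diff_le degree_monom_le degree_pCons_0 le0)
  moreover have "{z. z ^ m = c} = {z. poly P z = 0}"
    by (simp add: P_def poly_monom)
  ultimately show ?thesis
    using card_poly_roots_bound by (metis le_trans)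
qed

text \<open>In the field with \<open>r\<^sup>2\<close> elements the norm \<open>z \<mapsto> z ^ (r + 1)\<close> maps the
  \<open>(r - 1)(r + 1)\<close> nonzero elements into the at most \<open>r - 1\<close> roots of \<open>s ^ (r - 1) = 1\<close>,
  with fibres of size at most \<open>r + 1\<close>; so every fibre over such a root is full.\<close>

lemma card_norm_fibre_ge:
  fixes c :: "'a::{finite,field}"
  assumes card: "CARD('a) = r ^ 2" and c: "c ^ (r - 1) = 1"
  shows "r + 1 \<le> card {z::'a. z ^ (r + 1) = c}"
proof -
  have "card {0, 1::'a} \<le> CARD('a)"
    by (rule card_mono) auto
  then have "2 \<le> r ^ 2"
    using card by simp
  then have r2: "2 \<le> r"
    by (cases "r \<le> 1") (auto simp: power2_eq_square le_Suc_eq)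
  then obtain t where t: "r = t + 2"
    by (metis add.commute le_Suc_ex)
  define S where "S = {s::'a. s ^ (r - 1) = 1}"
  define fibre where "fibre s = {z::'a. z \<noteq> 0 \<and> z ^ (r + 1) = s}" for s
  have norm_in_S: "z ^ (r + 1) \<in> S" if "z \<noteq> 0" for z :: 'a
  proof -
    have "z * (z ^ (r + 1)) ^ (r - 1) = z ^ CARD('a)"
      by (simp add: t card power2_eq_square algebra_simps flip: power_mult power_Suc)
    then show ?thesis
      using that by (simp add: S_def field_power_card_UNIV)
  qed
  have fibre_le: "card (fibre s) \<le> r + 1" for s
  proof -
    have "card (fibre s) \<le> card {z::'a. z ^ (r + 1) = s}"
      by (rule card_mono) (auto simp: fibre_def)
    then show ?thesis
      using card_power_eq_le[of "r + 1" s] by simp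
  qed
  have "card S \<le> r - 1"
    unfolding S_def by (rule card_power_eq_le) (use r2 in auto)
  then have card_S_c: "card (S - {c}) \<le> r - 2"
    using c by (simp add: S_def)
  have "card (UNIV - {0::'a}) = (\<Sum>s\<in>S. card (fibre s))"
    using sum.group[of "UNIV - {0}" S "\<lambda>z. z ^ (r + 1)" "\<lambda>_. 1::nat"] norm_in_S
    by (simp add: fibre_def image_subset_iff)
  also have "\<dots> = card (fibre c) + (\<Sum>s\<in>S - {c}. card (fibre s))"
    using c by (simp add: S_def sum.remove)
  also have "(\<Sum>s\<in>S - {c}. card (fibre s)) \<le> card (S - {c}) * (r + 1)"
    using sum_bounded_above[of "S - {c}" "\<lambda>s. card (fibre s)" "r + 1"] fibre_le by simp
  also have "\<dots> \<le> (r - 2) * (r + 1)"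
    using card_S_c by (rule mult_right_mono) simp
  finally have "card (UNIV - {0::'a}) \<le> card (fibre c) + (r - 2) * (r + 1)"
    by simp
  moreover have "card (UNIV - {0::'a}) = (r - 2) * (r + 1) + (r + 1)"
    using card by (simp add: t power2_eq_square algebra_simps)
  ultimately have "r + 1 \<le> card (fibre c)"
    by linarith
  also have "\<dots> \<le> card {z::'a. z ^ (r + 1) = c}"
    by (rule card_mono) (auto simp: fibre_def)
  finally show ?thesis .
qed

lemma two_norm_minus_one_elements:
  fixes r :: nat
  assumes "CARD('a) = r ^ 2" and "prime CHAR('a)" and "r = CHAR('a) ^ e"
  obtains \<alpha> \<beta> :: "'a::{finite,field}" where "\<alpha> \<noteq> \<beta>" "\<alpha> ^ (r + 1) = -1" "\<beta> ^ (r + 1) = -1"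
proof -
  have "r + 1 \<le> card {z::'a. z ^ (r + 1) = -1}"
    using assms by (intro card_norm_fibre_ge minus_one_power_pred_CHAR_power)
  moreover have "0 < r"
    using assms(2,3) prime_gt_0_nat by simp
  ultimately have "\<not> card {z::'a. z ^ (r + 1) = -1} \<le> Suc 0"
    by linarith
  then show ?thesis
    using that by (auto simp: card_le_Suc0_iff_eq)
qed

section \<open>Linear codes given by coefficient maps\<close>

interpretation VS: vector_space "vscale :: 'a::field \<Rightarrow> (nat \<Rightarrow> 'a) \<Rightarrow> (nat \<Rightarrow> 'a)"
  by unfold_locales (auto simp: vscale_def fun_eq_iff algebra_simps)

lemma sum_apply: "(\<Sum>a\<in>A. f a) x = (\<Sum>a\<in>A. f a x)"
  by (induction A rule: infinite_finite_induct) auto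

lemma dim_range_coefficient_map:
  fixes f :: "(nat \<Rightarrow> 'a::field) \<Rightarrow> nat \<Rightarrow> 'a"
  assumes lin: "Vector_Spaces.linear vscale vscale f"
    and local: "\<And>u u'. (\<And>j. j < n \<Longrightarrow> u j = u' j) \<Longrightarrow> f u = f u'"
    and inj: "\<And>u j. f u = 0 \<Longrightarrow> j < n \<Longrightarrow> u j = 0"
  shows "VS.dim (range f) = n"
proof -
  interpret L: Vector_Spaces.linear vscale vscale f
    by (rule lin)
  define e where "e j = (\<lambda>i::nat. if i = j then 1 else 0 :: 'a)" for j
  define B where "B = (\<lambda>j. f (e j)) ` {..<n}"
  have coeff: "(\<Sum>j<n. vscale (u j) (e j)) i = (if i < n then u i else 0)" for u i
    by (simp add: sum_apply e_def vscale_def if_distrib cong: if_cong)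
  have expand: "f u = (\<Sum>j<n. vscale (u j) (f (e j)))" for u
  proof -
    have "f u = f (\<Sum>j<n. vscale (u j) (e j))"
      by (rule local) (simp add: coeff)
    then show ?thesis
      by (simp add: L.sum L.scale)
  qed
  have inj_basis: "inj_on (\<lambda>j. f (e j)) {..<n}"
  proof (rule inj_onI)
    fix i j assume "i \<in> {..<n}" "j \<in> {..<n}" "f (e i) = f (e j)"
    then have "(e i - e j) i = 0"
      using inj[of "e i - e j" i] by (simp add: L.diff)
    then show "i = j"
      by (auto simp: e_def split: if_splits)
  qed
  show ?thesis
  proof (rule VS.dim_unique)
    show "B \<subseteq> range f"
      by (auto simp: B_def)
    show "range f \<subseteq> VS.span B"
    proof
      fix w assume "w \<in> range f"
      then obtain u where "w = f u"
        by blast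
      show "w \<in> VS.span B"
        unfolding \<open>w = f u\<close> expand[of u] B_def
        by (rule VS.span_sum, rule VS.span_scale, rule VS.span_base) simp
    qed
    show "card B = n"
      by (simp add: B_def card_image[OF inj_basis])
    show "VS.independent B"
    proof (rule VS.independent_if_scalars_zero)
      fix g x assume sum0: "(\<Sum>x\<in>B. vscale (g x) x) = 0" and "x \<in> B"
      then obtain j where "j < n" "x = f (e j)"
        by (auto simp: B_def)
      have "f (\<Sum>l<n. vscale (g (f (e l))) (e l)) = 0"
        using sum0 by (simp add: B_def sum.reindex[OF inj_basis] L.sum L.scale)
      then have "(\<Sum>l<n. vscale (g (f (e l))) (e l)) j = 0"
        using \<open>j < n\<close> by (rule inj[where u = "\<Sum>l<n. vscale (g (f (e l))) (e l)"])
      then show "g x = 0"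
        using \<open>j < n\<close> \<open>x = f (e j)\<close> by (simp add: coeff)
    qed (simp add: B_def)
  qed
qed

section \<open>Generalized Reed--Solomon codes\<close>

definition lagrange_weight :: "nat \<Rightarrow> (nat \<Rightarrow> 'a::field) \<Rightarrow> nat \<Rightarrow> 'a" where
  "lagrange_weight n x i = inverse (\<Prod>j\<in>{..<n} - {i}. x i - x j)"

lemma lagrange_weight_nonzero:
  assumes "inj_on x {..<n}" and "i < n"
  shows "lagrange_weight n x i \<noteq> 0"
  using assms by (auto simp: lagrange_weight_def inj_on_def)

text \<open>Lagrange interpolation of \<open>z ^ t\<close> at the \<open>n\<close> distinct nodes \<open>x i\<close> reproduces
  \<open>z ^ t\<close>; the coefficient of \<open>z ^ (n - 1)\<close> of the interpolant is the sum below.\<close>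

lemma sum_lagrange_weight_power:
  assumes inj: "inj_on x {..<n}" and t: "t + 2 \<le> n"
  shows "(\<Sum>i<n. lagrange_weight n x i * x i ^ t) = 0"
proof -
  define v where "v = lagrange_weight n x"
  define L where "L i = (\<Prod>j\<in>{..<n} - {i}. [:- x j, 1:])" for i
  define P where "P = (\<Sum>i<n. smult (v i * x i ^ t) (L i))"
  have poly_L: "poly (L i) z = (\<Prod>j\<in>{..<n} - {i}. z - x j)" for i z
    by (simp add: L_def poly_prod)
  have degree_L: "degree (L i) = n - 1" and lead_L: "coeff (L i) (n - 1) = 1" if "i < n" for i
  proof -
    have "degree (L i) = card ({..<n} - {i})"
      unfolding L_def by (subst degree_prod_eq_sum_degree) auto
    then show "degree (L i) = n - 1"
      using that by simp
    moreover have "lead_coeff (L i) = 1"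
      unfolding L_def lead_coeff_prod by simp
    ultimately show "coeff (L i) (n - 1) = 1"
      by simp
  qed
  have poly_P: "poly P (x l) = x l ^ t" if "l < n" for l
  proof -
    have vanish: "poly (L i) (x l) = 0" if "i \<in> {..<n} - {l}" for i
      unfolding poly_L by (rule prod_zero) (use that \<open>l < n\<close> in auto)
    have "poly P (x l) = (\<Sum>i<n. v i * x i ^ t * poly (L i) (x l))"
      by (simp add: P_def poly_sum)
    also have "\<dots> = v l * x l ^ t * poly (L l) (x l)
        + (\<Sum>i\<in>{..<n} - {l}. v i * x i ^ t * poly (L i) (x l))"
      by (rule sum.remove) (use that in auto)
    also have "\<dots> = v l * x l ^ t * poly (L l) (x l)"
      using vanish by simp
    also have "\<dots> = x l ^ t"
      using lagrange_weight_nonzero[OF inj that] by (simp add: v_def lagrange_weight_def poly_L)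
    finally show ?thesis .
  qed
  have "degree P \<le> n - 1"
    unfolding P_def by (rule degree_sum_le) (auto intro: order.trans[OF degree_smult_le] simp: degree_L)
  then have "P = monom 1 t"
    using t by (intro poly_eqI_degree[of "x ` {..<n}"])
      (auto simp: poly_P poly_monom degree_monom_eq card_image[OF inj])
  then have "coeff P (n - 1) = 0"
    using t by simp
  moreover have "coeff P (n - 1) = (\<Sum>i<n. v i * x i ^ t)"
    unfolding P_def coeff_sum using lead_L by (intro sum.cong) auto
  ultimately show ?thesis
    by (simp add: v_def)
qed

definition grs_word ::
    "nat \<Rightarrow> nat \<Rightarrow> (nat \<Rightarrow> 'a) \<Rightarrow> (nat \<Rightarrow> 'a) \<Rightarrow> (nat \<Rightarrow> 'a) \<Rightarrow> nat \<Rightarrow> 'a::field" where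
  "grs_word n K w y a = (\<lambda>i. if i < n then w i * (\<Sum>j<K. a j * y i ^ j) else 0)"

lemma grs_word_cong:
  "(\<And>j. j < K \<Longrightarrow> a j = b j) \<Longrightarrow> grs_word n K w y a = grs_word n K w y b"
  by (auto simp: grs_word_def fun_eq_iff intro!: sum.cong)

lemma grs_word_add: "grs_word n K w y (a + b) = grs_word n K w y a + grs_word n K w y b"
  by (auto simp: grs_word_def fun_eq_iff algebra_simps sum.distrib)

lemma grs_word_scale: "grs_word n K w y (vscale c a) = vscale c (grs_word n K w y a)"
  by (auto simp: grs_word_def vscale_def fun_eq_iff algebra_simps sum_distrib_left)

lemma linear_code_grs: "linear_code n (range (grs_word n K w y))"
  unfolding linear_code_def VS.subspace_def
proof (intro conjI ballI allI)
  show "range (grs_word n K w y) \<subseteq> vecs n"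
    by (auto simp: grs_word_def vecs_def)
  have "grs_word n K w y 0 = 0"
    by (simp add: grs_word_def fun_eq_iff)
  then show "0 \<in> range (grs_word n K w y)"
    by (metis rangeI)
qed (auto simp flip: grs_word_add grs_word_scale)

lemma card_zeros_grs_word_less:
  assumes "inj_on y {..<n}" and "\<And>i. i < n \<Longrightarrow> w i \<noteq> 0" and "j < K" and "a j \<noteq> 0"
  shows "card {i. i < n \<and> grs_word n K w y a i = 0} < K"
proof -
  define F where "F = (\<Sum>l<K. monom (a l) l)"
  have "coeff F j = a j"
    using assms(3) by (simp add: F_def coeff_sum coeff_monom)
  then have "F \<noteq> 0"
    using assms(4) by auto
  have "degree F \<le> K - 1"
    unfolding F_def by (rule degree_sum_le) (auto intro: order.trans[OF degree_monom_le])
  then have "degree F < K"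
    using assms(3) by linarith
  have zeros: "{i. i < n \<and> grs_word n K w y a i = 0} = {i. i < n \<and> poly F (y i) = 0}"
    using assms(2) by (auto simp: grs_word_def F_def poly_sum poly_monom)
  have "card {i. i < n \<and> poly F (y i) = 0} \<le> card {z. poly F z = 0}"
  proof (rule card_inj_on_le)
    show "inj_on y {i. i < n \<and> poly F (y i) = 0}"
      using assms(1) by (rule inj_on_subset) auto
  qed (use poly_roots_finite[OF \<open>F \<noteq> 0\<close>] in auto)
  also have "\<dots> \<le> degree F"
    by (rule card_poly_roots_bound[OF \<open>F \<noteq> 0\<close>])
  finally show ?thesis
    using zeros \<open>degree F < K\<close> by simp
qed

lemma grs_word_eq_zero_imp_coeffs:
  assumes "K \<le> n" and "inj_on y {..<n}" and "\<And>i. i < n \<Longrightarrow> w i \<noteq> 0"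
    and "\<And>i. i < n \<Longrightarrow> grs_word n K w y a i = 0" and "j < K"
  shows "a j = 0"
proof (rule ccontr)
  assume "a j \<noteq> 0"
  then have "card {i. i < n \<and> grs_word n K w y a i = 0} < K"
    using assms by (intro card_zeros_grs_word_less) auto
  moreover have "{i. i < n \<and> grs_word n K w y a i = 0} = {..<n}"
    using assms(4) by auto
  ultimately show False
    using assms(1) by simp
qed

lemma hweight_grs_word_ge:
  assumes "inj_on y {..<n}" and "\<And>i. i < n \<Longrightarrow> w i \<noteq> 0" and "grs_word n K w y a \<noteq> 0"
  shows "n + 1 - K \<le> hweight n (grs_word n K w y a)"
proof -
  define Z where "Z = {i. i < n \<and> grs_word n K w y a i = 0}"
  have "grs_word n K w y 0 = 0"
    by (simp add: grs_word_def fun_eq_iff)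
  then obtain j where "j < K" "a j \<noteq> 0"
    using assms(3) grs_word_cong[of K a 0 n w y] by force
  then have "card Z < K"
    unfolding Z_def using assms(1,2) by (rule card_zeros_grs_word_less[rotated 2])
  moreover have "{i. i < n \<and> grs_word n K w y a i \<noteq> 0} = {..<n} - Z"
    by (auto simp: Z_def)
  moreover have "card ({..<n} - Z) = n - card Z"
    by (subst card_Diff_subset) (auto simp: Z_def)
  moreover have "card Z \<le> n"
    using card_mono[of "{..<n}" Z] by (auto simp: Z_def)
  ultimately show ?thesis
    by (simp add: hweight_def)
qed

section \<open>Hermitian duality of generalized Reed--Solomon codes\<close>

lemma conj_exponent_pos:
  assumes "\<And>a::'a::field. (a ^ r) ^ r = a"
  shows "0 < r"
  using assms[of 0] by (cases r) auto

lemma conj_sum: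
  fixes f :: "'b \<Rightarrow> 'a::field"
  assumes "\<And>a b::'a. (a + b) ^ r = a ^ r + b ^ r" and "0 < r"
  shows "(\<Sum>i\<in>I. f i) ^ r = (\<Sum>i\<in>I. f i ^ r)"
  by (induction I rule: infinite_finite_induct) (simp_all add: assms power_0_left)

lemma herm_inner_conj:
  fixes u v :: "nat \<Rightarrow> 'a::field"
  assumes add: "\<And>a b::'a. (a + b) ^ r = a ^ r + b ^ r"
    and invol: "\<And>a::'a. (a ^ r) ^ r = a"
  shows "herm_inner r N u v ^ r = herm_inner r N v u"
  unfolding herm_inner_def conj_sum[OF add conj_exponent_pos[OF invol]]
  by (simp add: power_mult_distrib invol mult.commute del: power_mult)

lemma herm_inner_grs_dual:
  fixes x :: "nat \<Rightarrow> 'a::field"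
  assumes add: "\<And>a b::'a. (a + b) ^ r = a ^ r + b ^ r"
    and invol: "\<And>a::'a. (a ^ r) ^ r = a"
    and inj: "inj_on x {..<n}" and K: "K1 + K2 \<le> n"
  shows "herm_inner r n (grs_word n K1 (\<lambda>_. 1) x a)
           (grs_word n K2 (\<lambda>i. lagrange_weight n x i ^ r) (\<lambda>i. x i ^ r) b) = 0"
proof -
  define v where "v = lagrange_weight n x"
  note conj_sum = conj_sum[OF add conj_exponent_pos[OF invol]]
  have conj_grs: "grs_word n K2 (\<lambda>i. v i ^ r) (\<lambda>i. x i ^ r) b i ^ r
      = v i * (\<Sum>l<K2. b l ^ r * x i ^ l)" if "i < n" for i
  proof -
    have "((x i ^ r) ^ l) ^ r = x i ^ l" for l
      by (metis invol mult.commute power_mult)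
    then show ?thesis
      using that by (simp add: grs_word_def conj_sum power_mult_distrib invol del: power_mult)
  qed
  have "herm_inner r n (grs_word n K1 (\<lambda>_. 1) x a) (grs_word n K2 (\<lambda>i. v i ^ r) (\<lambda>i. x i ^ r) b)
      = (\<Sum>i<n. (\<Sum>j<K1. a j * x i ^ j) * (v i * (\<Sum>l<K2. b l ^ r * x i ^ l)))"
    unfolding herm_inner_def by (intro sum.cong refl, subst conj_grs) (auto simp: grs_word_def)
  also have "\<dots> = (\<Sum>j<K1. \<Sum>l<K2. a j * b l ^ r * (\<Sum>i<n. v i * x i ^ (j + l)))"
    by (simp add: sum_distrib_left sum_distrib_right power_add mult_ac sum.swap[of _ "{..<n}"])
      (rule sum.cong[OF refl], subst sum.swap, simp add: mult_ac)
  also have "\<dots> = 0"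
    using K by (intro sum.neutral ballI) (simp add: v_def sum_lagrange_weight_power[OF inj])
  finally show ?thesis
    by (simp add: v_def)
qed

section \<open>Matrix-product codes with two constituents\<close>

definition pair_matrix :: "'a \<Rightarrow> 'a \<Rightarrow> nat \<Rightarrow> nat \<Rightarrow> 'a::field" where
  "pair_matrix \<alpha> \<beta> i j = (if j = 0 then 1 else if i = 0 then \<alpha> else \<beta>)"

definition mp_pair :: "nat \<Rightarrow> 'a \<Rightarrow> 'a \<Rightarrow> (nat \<Rightarrow> 'a) \<Rightarrow> (nat \<Rightarrow> 'a) \<Rightarrow> nat \<Rightarrow> 'a::field" where
  "mp_pair m \<alpha> \<beta> c d =
     (\<lambda>p. if p < m then c p + d p else if p < 2 * m then \<alpha> * c (p - m) + \<beta> * d (p - m) else 0)"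

lemma mp_code_pair_matrix:
  "mp_code m 2 2 C (pair_matrix \<alpha> \<beta>) = {mp_pair m \<alpha> \<beta> c d | c d. c \<in> C 0 \<and> d \<in> C 1}"
proof -
  have block: "(\<Sum>i<2. pair_matrix \<alpha> \<beta> i (p div m) * e i (p mod m))
      = mp_pair m \<alpha> \<beta> (e 0) (e 1) p" if "p < m * 2" for e :: "nat \<Rightarrow> nat \<Rightarrow> 'a" and p
  proof (cases "p < m")
    case False
    then have "p div m = 1" "p mod m = p - m"
      using that by (auto simp: div_if mod_if)
    then show ?thesis
      using that False by (simp add: pair_matrix_def mp_pair_def numeral_2_eq_2)
  qed (simp add: pair_matrix_def mp_pair_def numeral_2_eq_2)
  have outside: "mp_pair m \<alpha> \<beta> c d p = 0" if "\<not> p < m * 2" for c d p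
    using that by (simp add: mp_pair_def)
  show ?thesis
  proof (intro equalityI subsetI)
    fix w assume "w \<in> mp_code m 2 2 C (pair_matrix \<alpha> \<beta>)"
    then obtain e where "\<forall>i<2. e i \<in> C i"
      and "w = (\<lambda>p. if p < m * 2 then \<Sum>i<2. pair_matrix \<alpha> \<beta> i (p div m) * e i (p mod m) else 0)"
      by (auto simp: mp_code_def)
    then show "w \<in> {mp_pair m \<alpha> \<beta> c d | c d. c \<in> C 0 \<and> d \<in> C 1}"
      using block outside by (intro CollectI exI[of _ "e 0"] exI[of _ "e 1"]) auto
  next
    fix w assume "w \<in> {mp_pair m \<alpha> \<beta> c d | c d. c \<in> C 0 \<and> d \<in> C 1}"
    then obtain c d where "c \<in> C 0" "d \<in> C 1" "w = mp_pair m \<alpha> \<beta> c d"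
      by blast
    then show "w \<in> mp_code m 2 2 C (pair_matrix \<alpha> \<beta>)"
      using block[of _ "\<lambda>i. if i = 0 then c else d"] outside
      by (auto simp: mp_code_def less_2_cases_iff fun_eq_iff
          intro!: exI[of _ "\<lambda>i. if i = 0 then c else d"])
  qed
qed

lemma mp_pair_add:
  "mp_pair m \<alpha> \<beta> (c + c') (d + d') = mp_pair m \<alpha> \<beta> c d + mp_pair m \<alpha> \<beta> c' d'"
  by (auto simp: mp_pair_def fun_eq_iff algebra_simps)

lemma mp_pair_scale:
  "mp_pair m \<alpha> \<beta> (vscale a c) (vscale a d) = vscale a (mp_pair m \<alpha> \<beta> c d)"
  by (auto simp: mp_pair_def vscale_def fun_eq_iff algebra_simps)

lemma mp_pair_eq_zeroD:
  assumes "mp_pair m \<alpha> \<beta> c d = 0" and "\<alpha> \<noteq> \<beta>" and "i < m"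
  shows "c i = 0" and "d i = 0"
proof -
  have "mp_pair m \<alpha> \<beta> c d i = 0" and "mp_pair m \<alpha> \<beta> c d (m + i) = 0"
    using assms(1) by simp_all
  then have "c i + d i = 0" and "\<alpha> * c i + \<beta> * d i = 0"
    using assms(3) by (simp_all add: mp_pair_def)
  then have "(\<beta> - \<alpha>) * d i = 0"
    by (simp add: algebra_simps eq_neg_iff_add_eq_0[symmetric])
  then show "d i = 0"
    using assms(2) by simp
  then show "c i = 0"
    using \<open>c i + d i = 0\<close> by simp
qed

lemma sum_lessThan_double:
  fixes f :: "nat \<Rightarrow> 'a::comm_monoid_add"
  shows "(\<Sum>p<2 * m. f p) = (\<Sum>i<m. f i) + (\<Sum>i<m. f (m + i))"
  using sum.atLeastLessThan_concat[where g = f and m = 0 and n = m and p = "2 * m"]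
    sum.atLeastLessThan_shift_0[where g = f and m = m and n = "2 * m"]
  by (simp add: atLeast0LessThan comp_def)

text \<open>Because \<open>\<alpha> ^ (r + 1) = \<beta> ^ (r + 1) = -1\<close>, the diagonal terms cancel and only the
  cross terms between the two constituent codes survive.\<close>

lemma herm_inner_mp_pair:
  fixes \<alpha> \<beta> :: "'a::field"
  assumes add: "\<And>a b::'a. (a + b) ^ r = a ^ r + b ^ r"
    and \<alpha>: "\<alpha> ^ (r + 1) = -1" and \<beta>: "\<beta> ^ (r + 1) = -1"
  shows "herm_inner r (2 * m) (mp_pair m \<alpha> \<beta> c d) (mp_pair m \<alpha> \<beta> c' d')
    = (1 + \<alpha> * \<beta> ^ r) * herm_inner r m c d' + (1 + \<beta> * \<alpha> ^ r) * herm_inner r m d c'"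
proof -
  have pointwise: "(c i + d i) * (c' i + d' i) ^ r + (\<alpha> * c i + \<beta> * d i) * (\<alpha> * c' i + \<beta> * d' i) ^ r
      = (1 + \<alpha> * \<beta> ^ r) * (c i * d' i ^ r) + (1 + \<beta> * \<alpha> ^ r) * (d i * c' i ^ r)" for i
  proof -
    have "(c i + d i) * (c' i + d' i) ^ r + (\<alpha> * c i + \<beta> * d i) * (\<alpha> * c' i + \<beta> * d' i) ^ r
      = (1 + \<alpha> * \<alpha> ^ r) * (c i * c' i ^ r) + (1 + \<alpha> * \<beta> ^ r) * (c i * d' i ^ r)
        + (1 + \<beta> * \<alpha> ^ r) * (d i * c' i ^ r) + (1 + \<beta> * \<beta> ^ r) * (d i * d' i ^ r)"
      by (simp add: add power_mult_distrib algebra_simps)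
    moreover have "\<alpha> * \<alpha> ^ r = -1" "\<beta> * \<beta> ^ r = -1"
      using \<alpha> \<beta> by simp_all
    ultimately show ?thesis
      by simp
  qed
  show ?thesis
    unfolding herm_inner_def sum_lessThan_double
    by (simp add: mp_pair_def pointwise sum.distrib sum_distrib_left flip: sum.distrib)
qed

lemma hweight_mp_pair_zero:
  assumes "\<alpha> \<noteq> 0"
  shows "hweight (2 * m) (mp_pair m \<alpha> \<beta> c 0) = 2 * hweight m c"
proof -
  define S where "S = {i. i < m \<and> c i \<noteq> 0}"
  have "(\<lambda>i. m + i) ` S = {p. m \<le> p \<and> p < 2 * m \<and> c (p - m) \<noteq> 0}"
    by (auto simp: S_def) (rule image_eqI[where x = "x - m" for x], auto)
  then have "{p. p < 2 * m \<and> mp_pair m \<alpha> \<beta> c 0 p \<noteq> 0} = S \<union> (\<lambda>i. m + i) ` S"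
    using assms by (auto simp: S_def mp_pair_def)
  moreover have "card (S \<union> (\<lambda>i. m + i) ` S) = card S + card S"
    by (subst card_Un_disjoint) (auto simp: S_def card_image)
  ultimately show ?thesis
    by (simp add: hweight_def S_def)
qed

lemma hweight_mp_pair_ge:
  assumes "\<alpha> \<noteq> \<beta>"
  shows "hweight m d \<le> hweight (2 * m) (mp_pair m \<alpha> \<beta> c d)"
proof -
  define w where "w = mp_pair m \<alpha> \<beta> c d"
  define h where "h i = (if w i \<noteq> 0 then i else m + i)" for i
  have "w (m + i) \<noteq> 0" if "i < m" "d i \<noteq> 0" "w i = 0" for i
  proof -
    have "c i = - d i"
      using that by (simp add: w_def mp_pair_def eq_neg_iff_add_eq_0)
    then have "w (m + i) = (\<beta> - \<alpha>) * d i"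
      using that by (simp add: w_def mp_pair_def algebra_simps)
    then show ?thesis
      using assms that by simp
  qed
  then have "h ` {i. i < m \<and> d i \<noteq> 0} \<subseteq> {p. p < 2 * m \<and> w p \<noteq> 0}"
    by (auto simp: h_def)
  moreover have "inj_on h {i. i < m \<and> d i \<noteq> 0}"
    by (auto simp: inj_on_def h_def split: if_splits)
  ultimately show ?thesis
    unfolding hweight_def w_def by (intro card_inj_on_le) auto
qed

lemma hweight_mp_pair_ge_min:
  assumes "\<alpha> \<noteq> 0" and "\<alpha> \<noteq> \<beta>" and "mp_pair m \<alpha> \<beta> c d \<noteq> 0"
    and "c \<noteq> 0 \<Longrightarrow> d0 \<le> hweight m c" and "d \<noteq> 0 \<Longrightarrow> d1 \<le> hweight m d"
  shows "min (2 * d0) d1 \<le> hweight (2 * m) (mp_pair m \<alpha> \<beta> c d)"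
proof (cases "d = 0")
  case True
  moreover have "mp_pair m \<alpha> \<beta> 0 0 = 0"
    by (simp add: mp_pair_def fun_eq_iff)
  ultimately have "c \<noteq> 0"
    using assms(3) by auto
  then show ?thesis
    using True assms(1,4) hweight_mp_pair_zero by fastforce
next
  case False
  then show ?thesis
    using assms(2,5) hweight_mp_pair_ge[of \<alpha> \<beta> m d c] by linarith
qed

locale hermitian_grs_pair =
  fixes r n k :: nat and x :: "nat \<Rightarrow> 'a::field" and \<alpha> \<beta> :: 'a
  assumes conj_add: "\<And>a b::'a. (a + b) ^ r = a ^ r + b ^ r"
    and conj_conj: "\<And>a::'a. (a ^ r) ^ r = a"
    and k_le_n: "k \<le> n" and inj_x: "inj_on x {..<n}"
    and \<alpha>_ne_\<beta>: "\<alpha> \<noteq> \<beta>" and norm_\<alpha>: "\<alpha> ^ (r + 1) = -1" and norm_\<beta>: "\<beta> ^ (r + 1) = -1"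
begin

abbreviation grs0 :: "(nat \<Rightarrow> 'a) \<Rightarrow> nat \<Rightarrow> 'a" where
  "grs0 \<equiv> grs_word n k (\<lambda>_. 1) x"

abbreviation grs1 :: "(nat \<Rightarrow> 'a) \<Rightarrow> nat \<Rightarrow> 'a" where
  "grs1 \<equiv> grs_word n (n - k) (\<lambda>i. lagrange_weight n x i ^ r) (\<lambda>i. x i ^ r)"

definition constituents :: "nat \<Rightarrow> (nat \<Rightarrow> 'a) set" where
  "constituents i = (if i = 0 then range grs0 else range grs1)"

abbreviation code :: "(nat \<Rightarrow> 'a) set" where
  "code \<equiv> mp_code n 2 2 constituents (pair_matrix \<alpha> \<beta>)"

text \<open>Coordinates \<open>0, \<dots>, k - 1\<close> of \<open>u\<close> are the message of the first constituent and
  coordinates \<open>k, \<dots>, n - 1\<close> that of the second.\<close>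

definition encode :: "(nat \<Rightarrow> 'a) \<Rightarrow> nat \<Rightarrow> 'a" where
  "encode u = mp_pair n \<alpha> \<beta> (grs0 u) (grs1 (\<lambda>l. u (k + l)))"

lemma inj_conj_x: "inj_on (\<lambda>i. x i ^ r) {..<n}"
proof (rule inj_onI)
  fix i j assume "i \<in> {..<n}" "j \<in> {..<n}" "x i ^ r = x j ^ r"
  then show "i = j"
    using inj_x by (metis conj_conj inj_onD)
qed

lemma conj_lagrange_weight_nonzero: "i < n \<Longrightarrow> lagrange_weight n x i ^ r \<noteq> 0"
  using lagrange_weight_nonzero[OF inj_x] by simp

lemma linear_code_constituents: "linear_code n (constituents i)"
  by (simp add: constituents_def linear_code_grs)

lemma constituents_0: "constituents 0 = range grs0"
  and constituents_1: "constituents 1 = range grs1"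
  by (simp_all add: constituents_def)

lemma code_eq_range_encode: "code = range encode"
  unfolding mp_code_pair_matrix constituents_0 constituents_1
proof (intro equalityI subsetI)
  fix w assume "w \<in> {mp_pair n \<alpha> \<beta> c d |c d. c \<in> range grs0 \<and> d \<in> range grs1}"
  then obtain a b where "w = mp_pair n \<alpha> \<beta> (grs0 a) (grs1 b)"
    by auto
  also have "\<dots> = encode (\<lambda>j. if j < k then a j else b (j - k))"
    unfolding encode_def by (intro arg_cong2[where f = "mp_pair n \<alpha> \<beta>"] grs_word_cong) auto
  finally show "w \<in> range encode"
    by simp
qed (auto simp: encode_def)

lemma code_dim_code: "code_dim code = n"
  unfolding code_dim_def code_eq_range_encode
proof (rule dim_range_coefficient_map)
  show "Vector_Spaces.linear vscale vscale encode"
  proof -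
    have shift_add: "(\<lambda>l. (u + v) (k + l)) = (\<lambda>l. u (k + l)) + (\<lambda>l. v (k + l))" for u v :: "nat \<Rightarrow> 'a"
      by (simp add: fun_eq_iff)
    have shift_scale: "(\<lambda>l. vscale c u (k + l)) = vscale c (\<lambda>l. u (k + l))" for c and u :: "nat \<Rightarrow> 'a"
      by (simp add: fun_eq_iff vscale_def)
    show ?thesis
      unfolding Vector_Spaces.linear_iff encode_def shift_add shift_scale
      by (simp add: VS.vector_space_axioms grs_word_add grs_word_scale mp_pair_add mp_pair_scale)
  qed
  show "encode u = encode u'" if "\<And>j. j < n \<Longrightarrow> u j = u' j" for u u'
    unfolding encode_def using that k_le_n
    by (intro arg_cong2[where f = "mp_pair n \<alpha> \<beta>"] grs_word_cong) auto
  show "u j = 0" if "encode u = 0" and "j < n" for u j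
  proof -
    have zero: "grs0 u i = 0" "grs1 (\<lambda>l. u (k + l)) i = 0" if "i < n" for i
      using mp_pair_eq_zeroD[OF \<open>encode u = 0\<close>[unfolded encode_def] \<alpha>_ne_\<beta> that] by simp_all
    show ?thesis
    proof (cases "j < k")
      case True
      then show ?thesis
        using grs_word_eq_zero_imp_coeffs[OF k_le_n inj_x _ zero(1)] by simp
    next
      case False
      then have "j - k < n - k"
        using \<open>j < n\<close> by simp
      then have "u (k + (j - k)) = 0"
        using grs_word_eq_zero_imp_coeffs[OF _ inj_conj_x conj_lagrange_weight_nonzero zero(2)] by simp
      then show ?thesis
        using False by simp
    qed
  qed
qed

lemma herm_self_orth_code: "herm_self_orth r (2 * n) code"
  unfolding herm_self_orth_def mp_code_pair_matrix constituents_0 constituents_1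
proof clarify
  have cross: "herm_inner r n (grs0 a) (grs1 b) = 0" for a b
    using herm_inner_grs_dual[OF conj_add conj_conj inj_x] k_le_n by simp
  have "herm_inner r n (grs1 b) (grs0 a) = herm_inner r n (grs0 a) (grs1 b) ^ r" for a b
    by (rule herm_inner_conj[OF conj_add conj_conj, symmetric])
  then have "herm_inner r n (grs1 b) (grs0 a) = 0" for a b
    using cross conj_exponent_pos[OF conj_conj] by simp
  with cross show "herm_inner r (2 * n) (mp_pair n \<alpha> \<beta> (grs0 a) (grs1 b))
      (mp_pair n \<alpha> \<beta> (grs0 a') (grs1 b')) = 0" for a b a' b'
    by (simp add: herm_inner_mp_pair[OF conj_add norm_\<alpha> norm_\<beta>])
qed

lemma hweight_code:
  assumes "w \<in> code" and "w \<noteq> 0"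
  shows "min (2 * (n - k + 1)) (k + 1) \<le> hweight (2 * n) w"
proof -
  obtain a b where w: "w = mp_pair n \<alpha> \<beta> (grs0 a) (grs1 b)"
    using assms(1) unfolding mp_code_pair_matrix constituents_0 constituents_1 by blast
  have "\<alpha> \<noteq> 0"
    using norm_\<alpha> by auto
  have weight0: "n - k + 1 \<le> hweight n (grs0 a)" if "grs0 a \<noteq> 0"
    using hweight_grs_word_ge[OF inj_x _ that] k_le_n by simp
  have weight1: "k + 1 \<le> hweight n (grs1 b)" if "grs1 b \<noteq> 0"
    using hweight_grs_word_ge[OF inj_conj_x conj_lagrange_weight_nonzero that] k_le_n by simp
  show ?thesis
    unfolding w using \<open>\<alpha> \<noteq> 0\<close> \<alpha>_ne_\<beta> assms(2)[unfolded w] weight0 weight1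
    by (rule hweight_mp_pair_ge_min)
qed

end

theorem corollary5p3:
  fixes r n k :: nat
  assumes "\<exists>p e. prime p \<and> e > 0 \<and> r = p ^ e"
    and "card (UNIV :: 'a::{finite,field} set) = r ^ 2"
    and "k \<le> n" and "n \<le> card (UNIV :: 'a set)"
  shows "\<exists>m s l (C :: nat \<Rightarrow> (nat \<Rightarrow> 'a) set) (A :: nat \<Rightarrow> nat \<Rightarrow> 'a).
           (\<forall>i<s. linear_code m (C i)) \<and> m * l = 2 * n \<and>
           code_dim (mp_code m s l C A) = n \<and>
           herm_self_orth r (2 * n) (mp_code m s l C A) \<and>
           (\<forall>w\<in>mp_code m s l C A. w \<noteq> 0 \<longrightarrow>
              hweight (2 * n) w \<ge> min (2 * (n - k + 1)) (k + 1))"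
proof -
  obtain p e where p: "prime p" and r: "r = p ^ e"
    using assms(1) by blast
  have char: "CHAR('a) = p"
    using assms(2) p
    by (intro CHAR_eq_prime_of_CARD_eq_power[of p "e * 2"]) (simp_all add: r power_mult)
  have conj_add: "(a + b) ^ r = a ^ r + b ^ r" for a b :: 'a
    using p by (intro freshmans_dream') (simp_all add: char r)
  have conj_conj: "(a ^ r) ^ r = a" for a :: 'a
    using field_power_card_UNIV[of a] assms(2) by (simp add: power2_eq_square power_mult)
  obtain x :: "nat \<Rightarrow> 'a" where inj_x: "inj_on x {..<n}"
    using card_le_inj[of "{..<n}" "UNIV :: 'a set"] assms(4) by auto
  obtain \<alpha> \<beta> :: 'a where "\<alpha> \<noteq> \<beta>" "\<alpha> ^ (r + 1) = -1" "\<beta> ^ (r + 1) = -1"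
    using two_norm_minus_one_elements[OF assms(2)] p r unfolding char by blast
  then interpret hermitian_grs_pair r n k x \<alpha> \<beta>
    using conj_add conj_conj assms(3) inj_x by unfold_locales
  show ?thesis
    using linear_code_constituents code_dim_code herm_self_orth_code hweight_code
    by (intro exI[of _ n] exI[of _ 2] exI[of _ 2] exI[of _ constituents] exI[of _ "pair_matrix \<alpha> \<beta>"])
      simp
qed

end
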